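(* Let $0\le i\le m\le n$ and let $\Delta_\succ$ be the reverse lexicographic triangulation of the point configuration $\mathcal P(m,n)=\{e_a\oplus f_b:1\le a\le m,\,1\le b\le n\}\subset\mathbb R^m\oplus\mathbb R^n$ with respect to a total order of the points (identified with variables $x_{ab}\leftrightarrow e_a\oplus f_b$) in which $x_{11}\prec x_{22}\prec\cdots\prec x_{ii}$ and all remaining variables are larger than $x_{ii}$ and ordered arbitrarily among themselves. Then $x_{11},\dots,x_{ii}$ are cone points of $\Delta_\succ$. Moreover, if $i=m>1$, the simplicial complex obtained from $\Delta_\succ$ by removing $x_{11},\dots,x_{mm}$ is $\operatorname{core}(\Delta_\succ)$.
   Context: $e_a$, $f_b$ are standard unit vectors of $\mathbb R^m$, $\mathbb R^n$. Reverse lexicographic triangulation of a point configuration $\mathcal A=\{a_1\succ a_2\succ\cdots\succ a_N\}$: if $F_1,\dots,F_k$ are the facets of $\operatorname{conv}(\mathcal A)$ not containing $a_N$, then $\Delta_\succ(\mathcal A)$ has as maximal simplices the sets $G\cup\{a_N\}$ with $G$ a maximal simplex of $\Delta_\succ(\mathcal A\cap F_i)$ for some $i$ (recursively, with the induced order). A cone point of a simplicial complex is a vertex lying in every facet; $\operatorname{core}(\Delta)$ is the restriction of $\Delta$ to the vertices that are not cone points. *)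

theory Defs
  imports "HOL-Analysis.Analysis"
begin

text \<open>Reverse lexicographic triangulation of a labelled point configuration.
  Labels of type 'v, positions given by p, and strict total order prec on labels,
  where prec v w means v precedes w (v is smaller).\<close>

inductive revlex_max ::
  "('v \<Rightarrow> 'a::euclidean_space) \<Rightarrow> ('v \<Rightarrow> 'v \<Rightarrow> bool) \<Rightarrow> 'v set \<Rightarrow> 'v set \<Rightarrow> bool"
  for p prec where
  single: "revlex_max p prec {v} {v}"
| cone: "\<lbrakk> finite L; card L \<ge> 2; v \<in> L; \<forall>w\<in>L. w \<noteq> v \<longrightarrow> prec v w;
           F facet_of convex hull (p ` L); p v \<notin> F;
           revlex_max p prec {w \<in> L. p w \<in> F} G \<rbrakk>
         \<Longrightarrow> revlex_max p prec L (insert v G)"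

definition complex_of :: "'v set set \<Rightarrow> 'v set set" where
  "complex_of Fs = {\<sigma>. \<exists>F\<in>Fs. \<sigma> \<subseteq> F}"

definition revlex_complex ::
  "('v \<Rightarrow> 'a::euclidean_space) \<Rightarrow> ('v \<Rightarrow> 'v \<Rightarrow> bool) \<Rightarrow> 'v set \<Rightarrow> 'v set set" where
  "revlex_complex p prec L = complex_of {G. revlex_max p prec L G}"

definition vertices :: "'v set set \<Rightarrow> 'v set" where
  "vertices \<Delta> = {v. {v} \<in> \<Delta>}"

definition facets :: "'v set set \<Rightarrow> 'v set set" where
  "facets \<Delta> = {F \<in> \<Delta>. \<forall>G\<in>\<Delta>. F \<subseteq> G \<longrightarrow> G = F}"

definition cone_point :: "'v set set \<Rightarrow> 'v \<Rightarrow> bool" where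
  "cone_point \<Delta> v \<longleftrightarrow> v \<in> vertices \<Delta> \<and> (\<forall>F\<in>facets \<Delta>. v \<in> F)"

definition restrict_complex :: "'v set set \<Rightarrow> 'v set \<Rightarrow> 'v set set" where
  "restrict_complex \<Delta> W = {\<sigma> \<in> \<Delta>. \<sigma> \<subseteq> W}"

definition core :: "'v set set \<Rightarrow> 'v set set" where
  "core \<Delta> = restrict_complex \<Delta> {v \<in> vertices \<Delta>. \<not> cone_point \<Delta> v}"

definition delete_vertices :: "'v set set \<Rightarrow> 'v set \<Rightarrow> 'v set set" where
  "delete_vertices \<Delta> D = {\<sigma> \<in> \<Delta>. \<sigma> \<inter> D = {}}"

definition Ppt :: "'m::finite \<times> 'n::finite \<Rightarrow> (real^'m) \<times> (real^'n)" where
  "Ppt x = (axis (fst x) 1, axis (snd x) 1)"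

end

(*
  The points e_a + f_b of a product configuration A x B are the vertices of a product of
  simplices.  A facet avoiding the point of (a0, b0) is cut out by the hyperplane of the row a0
  or of the column b0: if it met both, the rectangle spanned by (a0, b) and (a, b0) would force
  (a0, b0) into it.  So every step of the reverse lexicographic recursion deletes the row or the
  column of the current smallest point; all maximal simplices then have m + n - 1 elements, and
  the cone points are the points lying in all of them.

  The diagonal point x_kk is the smallest point of every subconfiguration that contains it but
  no earlier x_ll, and deleting its row or column keeps all later diagonal points, so every
  maximal simplex contains x_11, ..., x_ii.  Conversely, if i = m > 1, a point y outside the
  diagonal lies in some row a_k; deleting the columns of x_11, ..., x_(k-1)(k-1) and then the
  row of x_kk produces a maximal simplex that avoids y.
*)

theory Submission
  imports Defs
begin

lemma facet_eq_proper_face: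
  fixes S :: "'a::euclidean_space set"
  assumes "convex S" "F facet_of S" "H face_of S" "H \<noteq> S" "F \<subseteq> H"
  shows "F = H"
proof (rule ccontr)
  assume "F \<noteq> H"
  have "F face_of H"
    using face_of_subset[OF facet_of_imp_face_of[OF assms(2)] assms(5) face_of_imp_subset[OF assms(3)]] .
  with \<open>F \<noteq> H\<close> have "aff_dim F < aff_dim H"
    using face_of_aff_dim_lt[OF face_of_imp_convex[OF assms(3)]] by blast
  moreover have "aff_dim H < aff_dim S"
    using face_of_aff_dim_lt[OF assms(1,3,4)] .
  ultimately show False
    using assms(2) by (simp add: facet_of_def)
qed

lemma face_of_hull_eq_hull_vertices:
  fixes p :: "'v \<Rightarrow> 'a::euclidean_space"
  assumes "finite L" "F face_of convex hull (p ` L)"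
  shows "F = convex hull (p ` {w \<in> L. p w \<in> F})"
proof
  obtain S' where S': "S' \<subseteq> p ` L" "F = convex hull S'"
    using face_of_convex_hull_subset[OF finite_imp_compact[OF finite_imageI[OF assms(1)]] assms(2)] .
  have "S' \<subseteq> p ` {w \<in> L. p w \<in> F}"
    using S' hull_subset[of S' convex] by blast
  then show "F \<subseteq> convex hull (p ` {w \<in> L. p w \<in> F})"
    using S'(2) hull_mono by blast
  show "convex hull (p ` {w \<in> L. p w \<in> F}) \<subseteq> F"
    using face_of_imp_convex[OF assms(2)] by (intro hull_minimal) auto
qed

context
  fixes p :: "'v \<Rightarrow> 'a::euclidean_space" and L R :: "'v set" and c :: 'a
  assumes finite: "finite L"
    and indicator: "\<forall>w\<in>L. c \<bullet> p w = (if w \<in> R then 1 else 0)"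
begin

private lemma zero_face: "convex hull (p ` L) \<inter> {x. c \<bullet> x = 0} face_of convex hull (p ` L)"
proof (rule face_of_Int_supporting_hyperplane_ge)
  have "p ` L \<subseteq> {x. c \<bullet> x \<ge> 0}"
    using indicator by auto
  then have "convex hull (p ` L) \<subseteq> {x. c \<bullet> x \<ge> 0}"
    by (intro hull_minimal) (simp_all add: convex_halfspace_ge)
  then show "\<And>x. x \<in> convex hull (p ` L) \<Longrightarrow> c \<bullet> x \<ge> 0" by blast
qed simp

private lemma in_zero_face_iff:
  "w \<in> L \<Longrightarrow> p w \<in> convex hull (p ` L) \<inter> {x. c \<bullet> x = 0} \<longleftrightarrow> w \<notin> R"
  using indicator hull_inc[of "p w" "p ` L" convex] by auto

lemma facet_vertices_eq_zero_face:
  assumes "F facet_of convex hull (p ` L)" "v \<in> L" "v \<in> R" "{w \<in> L. p w \<in> F} \<inter> R = {}"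
  shows "{w \<in> L. p w \<in> F} = L - R"
proof -
  define H where "H = convex hull (p ` L) \<inter> {x. c \<bullet> x = 0}"
  have "F = convex hull (p ` {w \<in> L. p w \<in> F})"
    using face_of_hull_eq_hull_vertices[OF finite facet_of_imp_face_of[OF assms(1)]] .
  also have "\<dots> \<subseteq> H"
    using assms(4) in_zero_face_iff face_of_imp_convex[OF zero_face]
    by (intro hull_minimal) (auto simp: H_def)
  finally have "F \<subseteq> H" .
  moreover have "H \<noteq> convex hull (p ` L)"
    using assms(2,3) in_zero_face_iff hull_inc[of "p v" "p ` L" convex] by (auto simp: H_def)
  ultimately have "F = H"
    using facet_eq_proper_face[OF convex_convex_hull assms(1) zero_face[folded H_def]] by blast
  then show ?thesis
    using in_zero_face_iff by (auto simp: H_def)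
qed

lemma facet_containing_zero_face:
  assumes "v \<in> L" "v \<in> R" "u \<in> L" "u \<notin> R"
  obtains F where "F facet_of convex hull (p ` L)" "p v \<notin> F" "p ` (L - R) \<subseteq> F"
proof -
  define H where "H = convex hull (p ` L) \<inter> {x. c \<bullet> x = 0}"
  have "p v \<in> convex hull (p ` L)" "p v \<notin> H"
    using assms(1,2) in_zero_face_iff hull_inc[of "p v" "p ` L" convex] by (auto simp: H_def)
  moreover have "H \<noteq> {}"
    using assms(3,4) in_zero_face_iff by (auto simp: H_def)
  moreover have "polyhedron (convex hull (p ` L))"
    using finite by (simp add: polyhedron_convex_hull)
  ultimately have "H = \<Inter>{F. F facet_of convex hull (p ` L) \<and> H \<subseteq> F}"
    using face_of_polyhedron zero_face[folded H_def] by blast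
  with \<open>p v \<notin> H\<close> obtain F where "F facet_of convex hull (p ` L)" "H \<subseteq> F" "p v \<notin> F"
    by blast
  moreover have "p ` (L - R) \<subseteq> H"
    using in_zero_face_iff by (auto simp: H_def)
  ultimately show thesis
    using that by blast
qed

end

lemma inj_Ppt: "inj Ppt"
  by (auto simp: inj_def Ppt_def axis_eq_axis)

lemma inner_Ppt_row [simp]: "(axis a 1, 0) \<bullet> Ppt w = (if fst w = a then 1 else 0)"
  by (cases w) (simp add: Ppt_def inner_axis_axis)

lemma inner_Ppt_column [simp]: "(0, axis b 1) \<bullet> Ppt w = (if snd w = b then 1 else 0)"
  by (cases w) (simp add: Ppt_def inner_axis_axis)

lemma product_face_swap:
  assumes F: "F face_of convex hull (Ppt ` (A \<times> B))"
    and "a \<in> A" "a' \<in> A" "b \<in> B" "b' \<in> B" "Ppt (a, b') \<in> F" "Ppt (a', b) \<in> F"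
  shows "Ppt (a, b) \<in> F"
proof (cases "a = a'")
  case True
  with assms show ?thesis by simp
next
  case False
  have "midpoint (Ppt (a, b')) (Ppt (a', b)) \<in> F"
    using assms(6,7) face_of_imp_convex[OF F]
    by (meson convex_contains_segment midpoint_in_closed_segment subsetD)
  \<comment> \<open>the two diagonals of a rectangle have the same midpoint\<close>
  moreover have "midpoint (Ppt (a, b')) (Ppt (a', b)) = midpoint (Ppt (a, b)) (Ppt (a', b'))"
    by (simp add: midpoint_def Ppt_def algebra_simps)
  moreover have "midpoint (Ppt (a, b)) (Ppt (a', b')) \<in> open_segment (Ppt (a, b)) (Ppt (a', b'))"
    using False by (auto dest: injD[OF inj_Ppt])
  moreover have "Ppt (a, b) \<in> convex hull (Ppt ` (A \<times> B))"
    "Ppt (a', b') \<in> convex hull (Ppt ` (A \<times> B))"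
    using assms(2-5) by (simp_all add: hull_inc)
  ultimately show ?thesis
    using face_ofD[OF F] by metis
qed

lemma product_facet_cases:
  assumes v: "(a0, b0) \<in> A \<times> B"
    and F: "F facet_of convex hull (Ppt ` (A \<times> B))" "Ppt (a0, b0) \<notin> F"
  shows "{w \<in> A \<times> B. Ppt w \<in> F} = (A - {a0}) \<times> B
    \<or> {w \<in> A \<times> B. Ppt w \<in> F} = A \<times> (B - {b0})"
proof -
  let ?V = "{w \<in> A \<times> B. Ppt w \<in> F}"
  have "?V \<inter> {w. fst w = a0} = {} \<or> ?V \<inter> {w. snd w = b0} = {}"
  proof (rule ccontr)
    assume "\<not> ?thesis"
    then obtain w w' where "w \<in> ?V" "fst w = a0" "w' \<in> ?V" "snd w' = b0"
      by blast
    then have "Ppt (a0, b0) \<in> F"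
      using product_face_swap[OF facet_of_imp_face_of[OF F(1)], of a0 "fst w'" b0 "snd w"] v
      by (cases w, cases w') auto
    with F(2) show False ..
  qed
  then show ?thesis
  proof
    assume avoid: "?V \<inter> {w. fst w = a0} = {}"
    have "?V = A \<times> B - {w. fst w = a0}"
      by (rule facet_vertices_eq_zero_face[where L = "A \<times> B" and p = Ppt
            and c = "(axis a0 1, 0)" and v = "(a0, b0)"])
        (use avoid v F(1) in auto)
    moreover have "A \<times> B - {w. fst w = a0} = (A - {a0}) \<times> B"
      by auto
    ultimately show ?thesis
      by simp
  next
    assume avoid: "?V \<inter> {w. snd w = b0} = {}"
    have "?V = A \<times> B - {w. snd w = b0}"
      by (rule facet_vertices_eq_zero_face[where L = "A \<times> B" and p = Ppt
            and c = "(0, axis b0 1)" and v = "(a0, b0)"])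
        (use avoid v F(1) in auto)
    moreover have "A \<times> B - {w. snd w = b0} = A \<times> (B - {b0})"
      by auto
    ultimately show ?thesis
      by simp
  qed
qed

lemma product_row_facet:
  assumes "(a0, b0) \<in> A \<times> B" "a1 \<in> A" "a1 \<noteq> a0"
  obtains F where "F facet_of convex hull (Ppt ` (A \<times> B))" "Ppt (a0, b0) \<notin> F"
    "{w \<in> A \<times> B. Ppt w \<in> F} = (A - {a0}) \<times> B"
proof -
  obtain F where F: "F facet_of convex hull (Ppt ` (A \<times> B))" "Ppt (a0, b0) \<notin> F"
    "Ppt ` (A \<times> B - {w. fst w = a0}) \<subseteq> F"
    by (rule facet_containing_zero_face[where L = "A \<times> B" and p = Ppt and R = "{w. fst w = a0}"
          and c = "(axis a0 1, 0)" and v = "(a0, b0)" and u = "(a1, b0)"])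
      (use assms in auto)
  then have "(a1, b0) \<in> {w \<in> A \<times> B. Ppt w \<in> F}"
    using assms by auto
  then have "{w \<in> A \<times> B. Ppt w \<in> F} \<noteq> A \<times> (B - {b0})"
    by auto
  then show thesis
    using product_facet_cases[OF assms(1) F(1,2)] that F(1,2) by blast
qed

lemma product_column_facet:
  assumes "(a0, b0) \<in> A \<times> B" "b1 \<in> B" "b1 \<noteq> b0"
  obtains F where "F facet_of convex hull (Ppt ` (A \<times> B))" "Ppt (a0, b0) \<notin> F"
    "{w \<in> A \<times> B. Ppt w \<in> F} = A \<times> (B - {b0})"
proof -
  obtain F where F: "F facet_of convex hull (Ppt ` (A \<times> B))" "Ppt (a0, b0) \<notin> F"
    "Ppt ` (A \<times> B - {w. snd w = b0}) \<subseteq> F"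
    by (rule facet_containing_zero_face[where L = "A \<times> B" and p = Ppt and R = "{w. snd w = b0}"
          and c = "(0, axis b0 1)" and v = "(a0, b0)" and u = "(a0, b1)"])
      (use assms in auto)
  then have "(a0, b1) \<in> {w \<in> A \<times> B. Ppt w \<in> F}"
    using assms by auto
  then have "{w \<in> A \<times> B. Ppt w \<in> F} \<noteq> (A - {a0}) \<times> B"
    by auto
  then show thesis
    using product_facet_cases[OF assms(1) F(1,2)] that F(1,2) by blast
qed

lemma revlex_max_subset: "revlex_max p prec L G \<Longrightarrow> G \<subseteq> L"
  by (induction rule: revlex_max.induct) auto

lemma revlex_max_finite: "revlex_max p prec L G \<Longrightarrow> finite G"
  by (induction rule: revlex_max.induct) auto

lemma revlex_max_nonempty: "revlex_max p prec L G \<Longrightarrow> G \<noteq> {}"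
  by (cases rule: revlex_max.cases) auto

lemma revlex_max_insert_row:
  assumes v: "(a0, b0) \<in> A \<times> B"
    and least: "\<forall>w\<in>A \<times> B. w \<noteq> (a0, b0) \<longrightarrow> prec (a0, b0) w"
    and G: "revlex_max Ppt prec ((A - {a0}) \<times> B) G"
  shows "revlex_max Ppt prec (A \<times> B) (insert (a0, b0) G)"
proof -
  obtain w where "w \<in> G"
    using revlex_max_nonempty[OF G] by blast
  then have a1: "fst w \<in> A" "fst w \<noteq> a0"
    using revlex_max_subset[OF G] by auto
  obtain F where F: "F facet_of convex hull (Ppt ` (A \<times> B))" "Ppt (a0, b0) \<notin> F"
    "{w \<in> A \<times> B. Ppt w \<in> F} = (A - {a0}) \<times> B"
    using product_row_facet[OF v a1] .
  show ?thesis
  proof (rule revlex_max.cone)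
    show "2 \<le> card (A \<times> B)"
      using card_mono[of "A \<times> B" "{(a0, b0), (fst w, b0)}"] v a1 by auto
  qed (use v least F G in auto)
qed

lemma revlex_max_insert_column:
  assumes v: "(a0, b0) \<in> A \<times> B"
    and least: "\<forall>w\<in>A \<times> B. w \<noteq> (a0, b0) \<longrightarrow> prec (a0, b0) w"
    and G: "revlex_max Ppt prec (A \<times> (B - {b0})) G"
  shows "revlex_max Ppt prec (A \<times> B) (insert (a0, b0) G)"
proof -
  obtain w where "w \<in> G"
    using revlex_max_nonempty[OF G] by blast
  then have b1: "snd w \<in> B" "snd w \<noteq> b0"
    using revlex_max_subset[OF G] by auto
  obtain F where F: "F facet_of convex hull (Ppt ` (A \<times> B))" "Ppt (a0, b0) \<notin> F"
    "{w \<in> A \<times> B. Ppt w \<in> F} = A \<times> (B - {b0})"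
    using product_column_facet[OF v b1] .
  show ?thesis
  proof (rule revlex_max.cone)
    show "2 \<le> card (A \<times> B)"
      using card_mono[of "A \<times> B" "{(a0, b0), (a0, snd w)}"] v b1 by auto
  qed (use v least F G in auto)
qed

lemma revlex_max_product_exists:
  fixes A :: "'m::finite set" and B :: "'n::finite set"
  assumes "transp prec" "totalp prec" "A \<noteq> {}" "B \<noteq> {}"
  shows "\<exists>G. revlex_max Ppt prec (A \<times> B) G"
  using assms(3,4)
proof (induction "card (A \<times> B)" arbitrary: A B rule: less_induct)
  case less
  have "\<exists>v\<in>A \<times> B. \<forall>w\<in>A \<times> B. w \<noteq> v \<longrightarrow> prec v w"
    using transp_on_subset[OF assms(1)] totalp_on_subset[OF assms(2)] less.prems
    by (intro Finite_Set.bex_least_element) auto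
  then obtain v where v: "v \<in> A \<times> B" and least: "\<forall>w\<in>A \<times> B. w \<noteq> v \<longrightarrow> prec v w"
    by blast
  obtain a0 b0 where v_eq: "v = (a0, b0)"
    by fastforce
  consider "A - {a0} \<noteq> {}" | "B - {b0} \<noteq> {}" | "A \<times> B = {v}"
    using v v_eq by auto
  then show ?case
  proof cases
    case 1
    have "card ((A - {a0}) \<times> B) < card (A \<times> B)"
      using v v_eq by (intro psubset_card_mono) auto
    then obtain G where "revlex_max Ppt prec ((A - {a0}) \<times> B) G"
      using less.hyps 1 less.prems by blast
    then show ?thesis
      using revlex_max_insert_row v least v_eq by blast
  next
    case 2
    have "card (A \<times> (B - {b0})) < card (A \<times> B)"
      using v v_eq by (intro psubset_card_mono) auto
    then obtain G where "revlex_max Ppt prec (A \<times> (B - {b0})) G"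
      using less.hyps 2 less.prems by blast
    then show ?thesis
      using revlex_max_insert_column v least v_eq by blast
  next
    case 3
    then show ?thesis
      using revlex_max.single by metis
  qed
qed

lemma revlex_max_product_card:
  fixes A :: "'m::finite set" and B :: "'n::finite set"
  assumes "revlex_max Ppt prec (A \<times> B) G"
  shows "card G + 1 = card A + card B"
  using assms
proof (induction "A \<times> B" G arbitrary: A B rule: revlex_max.induct)
  case (single v)
  then have "card A * card B = 1"
    by (metis card_cartesian_product is_singletonI is_singleton_altdef)
  then show ?case
    by simp
next
  case (cone v F G)
  obtain a0 b0 where v: "v = (a0, b0)"
    by fastforce
  have "v \<notin> G" "finite G"
    using revlex_max_subset[OF cone.hyps(7)] revlex_max_finite[OF cone.hyps(7)] cone.hyps(6) by auto
  then have card_insert: "card (insert v G) = card G + 1"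
    by simp
  have a0: "a0 \<in> A" and b0: "b0 \<in> B"
    using cone.hyps(3) v by auto
  from product_facet_cases[of a0 b0 A B F] cone.hyps(3,5,6) v
  consider "{w \<in> A \<times> B. Ppt w \<in> F} = (A - {a0}) \<times> B"
    | "{w \<in> A \<times> B. Ppt w \<in> F} = A \<times> (B - {b0})"
    by auto
  then show ?case
  proof cases
    case 1
    then have "card G + 1 = card (A - {a0}) + card B"
      by (rule cone.hyps(8))
    then show ?thesis
      using card_insert a0 card_Suc_Diff1[of A a0] by simp
  next
    case 2
    then have "card G + 1 = card A + card (B - {b0})"
      by (rule cone.hyps(8))
    then show ?thesis
      using card_insert b0 card_Suc_Diff1[of B b0] by simp
  qed
qed

lemma facets_complex_of:
  assumes "\<forall>F\<in>Fs. \<forall>G\<in>Fs. F \<subseteq> G \<longrightarrow> F = G"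
  shows "facets (complex_of Fs) = Fs"
proof (intro equalityI subsetI)
  fix F
  assume "F \<in> facets (complex_of Fs)"
  then obtain G where "G \<in> Fs" "F \<subseteq> G" and maximal: "\<forall>H\<in>complex_of Fs. F \<subseteq> H \<longrightarrow> H = F"
    unfolding facets_def complex_of_def by blast
  moreover have "G \<in> complex_of Fs"
    using \<open>G \<in> Fs\<close> unfolding complex_of_def by blast
  ultimately show "F \<in> Fs"
    by metis
next
  fix F
  assume "F \<in> Fs"
  have "H = F" if "H \<subseteq> G" "G \<in> Fs" "F \<subseteq> H" for G H
    using assms \<open>F \<in> Fs\<close> that by (metis subset_antisym subset_trans)
  with \<open>F \<in> Fs\<close> show "F \<in> facets (complex_of Fs)"
    unfolding facets_def complex_of_def by blast
qed

lemma cone_point_complex_of: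
  assumes "\<forall>F\<in>Fs. \<forall>G\<in>Fs. F \<subseteq> G \<longrightarrow> F = G" "Fs \<noteq> {}"
  shows "cone_point (complex_of Fs) v \<longleftrightarrow> (\<forall>F\<in>Fs. v \<in> F)"
  using assms(2) unfolding cone_point_def facets_complex_of[OF assms(1)]
  by (auto simp: vertices_def complex_of_def)

lemma core_complex_of:
  "core (complex_of Fs) = delete_vertices (complex_of Fs) {v. cone_point (complex_of Fs) v}"
proof -
  have "\<sigma> \<subseteq> vertices (complex_of Fs)" if "\<sigma> \<in> complex_of Fs" for \<sigma>
    using that by (auto simp: vertices_def complex_of_def)
  then show ?thesis
    unfolding core_def restrict_complex_def delete_vertices_def by blast
qed

lemma cone_point_revlex_complex:
  fixes prec :: "'m::finite \<times> 'n::finite \<Rightarrow> 'm \<times> 'n \<Rightarrow> bool"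
  assumes "transp prec" "totalp prec"
  shows "cone_point (revlex_complex Ppt prec UNIV) v
    \<longleftrightarrow> (\<forall>G. revlex_max Ppt prec UNIV G \<longrightarrow> v \<in> G)"
proof -
  let ?Ms = "{G. revlex_max Ppt prec (UNIV :: ('m \<times> 'n) set) G}"
  have UNIV_product: "(UNIV :: ('m \<times> 'n) set) = UNIV \<times> UNIV"
    by simp
  have "\<forall>F\<in>?Ms. \<forall>G\<in>?Ms. F \<subseteq> G \<longrightarrow> F = G"
    using revlex_max_product_card[of prec UNIV UNIV] revlex_max_finite card_subset_eq
    unfolding UNIV_product by (metis mem_Collect_eq add_right_cancel)
  moreover have "?Ms \<noteq> {}"
    using revlex_max_product_exists[OF assms, of UNIV UNIV] by simp
  ultimately show ?thesis
    unfolding revlex_complex_def by (simp add: cone_point_complex_of)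
qed

locale diagonal_revlex =
  fixes i :: nat and \<alpha> :: "nat \<Rightarrow> 'm::finite" and \<beta> :: "nat \<Rightarrow> 'n::finite"
    and prec :: "'m \<times> 'n \<Rightarrow> 'm \<times> 'n \<Rightarrow> bool"
  assumes inj_\<alpha>: "inj_on \<alpha> {1..i}" and inj_\<beta>: "inj_on \<beta> {1..i}"
    and transp: "transp prec" and irreflp: "irreflp prec" and totalp: "totalp prec"
    and diag_increasing: "\<forall>k\<in>{1..i}. \<forall>l\<in>{1..i}. k < l \<longrightarrow> prec (\<alpha> k, \<beta> k) (\<alpha> l, \<beta> l)"
    and diag_below: "\<forall>k\<in>{1..i}. \<forall>x. x \<notin> (\<lambda>l. (\<alpha> l, \<beta> l)) ` {1..i} \<longrightarrow> prec (\<alpha> k, \<beta> k) x"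
begin

abbreviation diag :: "nat \<Rightarrow> 'm \<times> 'n" where
  "diag k \<equiv> (\<alpha> k, \<beta> k)"

lemma diag_prec:
  assumes "k \<in> {1..i}" "w \<notin> diag ` {1..<k}" "w \<noteq> diag k"
  shows "prec (diag k) w"
proof (cases "w \<in> diag ` {1..i}")
  case True
  then obtain l where "l \<in> {1..i}" "w = diag l"
    by blast
  moreover have "l \<notin> {1..<k}" "l \<noteq> k"
    using assms(2,3) \<open>w = diag l\<close> by blast+
  ultimately have "k < l"
    by auto
  with assms(1) \<open>l \<in> {1..i}\<close> \<open>w = diag l\<close> show ?thesis
    using diag_increasing by blast
next
  case False
  with assms(1) show ?thesis
    using diag_below by blast
qed

lemma diag_eq_least:
  assumes "k \<in> {1..i}" "diag k \<in> L" "diag ` {1..<k} \<inter> L = {}"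
    and "v \<in> L" "\<forall>w\<in>L. w \<noteq> v \<longrightarrow> prec v w"
  shows "v = diag k"
proof (rule ccontr)
  assume "v \<noteq> diag k"
  moreover have "v \<notin> diag ` {1..<k}"
    using assms(3,4) by blast
  ultimately have "prec v (diag k)" "prec (diag k) v"
    using assms(1,2,5) diag_prec by auto
  then show False
    using transp irreflp by (meson irreflpD transpD)
qed

lemma diag_least_in_remaining_columns:
  assumes "k \<in> {1..i}" "w \<in> A \<times> (B - \<beta> ` {1..<k})" "w \<noteq> diag k"
  shows "prec (diag k) w"
proof -
  have "w \<notin> diag ` {1..<k}"
    using assms(2) by force
  then show ?thesis
    using diag_prec assms(1,3) by blast
qed

lemma diag_in_revlex_max:
  assumes "revlex_max Ppt prec (A \<times> B) G" "j \<in> {1..i}" "diag j \<in> A \<times> B"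
  shows "diag j \<in> G"
  using assms
proof (induction "A \<times> B" G arbitrary: A B j rule: revlex_max.induct)
  case (single v)
  then show ?case by simp
next
  case (cone v F G)
  have "\<exists>k. k \<in> {1..i} \<and> diag k \<in> A \<times> B"
    using cone.prems by blast
  then obtain k where k: "k \<in> {1..i}" "diag k \<in> A \<times> B"
    and below: "\<forall>l<k. \<not> (l \<in> {1..i} \<and> diag l \<in> A \<times> B)"
    unfolding exists_least_iff[of "\<lambda>k. k \<in> {1..i} \<and> diag k \<in> A \<times> B"] by blast
  have "diag ` {1..<k} \<inter> A \<times> B = {}"
    using below k(1) by auto
  with k have "v = diag k"
    using cone.hyps(3,4) by (rule diag_eq_least)
  show ?case
  proof (cases "j = k")
    case True
    with \<open>v = diag k\<close> show ?thesis by simp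
  next
    case False
    then have "\<alpha> j \<noteq> \<alpha> k" "\<beta> j \<noteq> \<beta> k"
      using inj_onD[OF inj_\<alpha> _ cone.prems(1) k(1)] inj_onD[OF inj_\<beta> _ cone.prems(1) k(1)] by auto
    have "Ppt (diag k) \<notin> F"
      using cone.hyps(6) \<open>v = diag k\<close> by simp
    from product_facet_cases[OF k(2) cone.hyps(5) this]
    have "diag j \<in> G"
    proof (elim disjE)
      assume row: "{w \<in> A \<times> B. Ppt w \<in> F} = (A - {\<alpha> k}) \<times> B"
      with \<open>\<alpha> j \<noteq> \<alpha> k\<close> show ?thesis
        using cone.hyps(8)[OF row cone.prems(1)] cone.prems(2) by simp
    next
      assume column: "{w \<in> A \<times> B. Ppt w \<in> F} = A \<times> (B - {\<beta> k})"
      with \<open>\<beta> j \<noteq> \<beta> k\<close> show ?thesis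
        using cone.hyps(8)[OF column cone.prems(1)] cone.prems(2) by simp
    qed
    then show ?thesis
      by simp
  qed
qed

lemma diag_column_fresh:
  assumes "k \<in> {1..i}"
  shows "\<beta> k \<notin> \<beta> ` {1..<k}"
proof -
  have "{1..<k} \<subseteq> {1..i}"
    using assms by auto
  then show ?thesis
    using inj_on_image_mem_iff[OF inj_\<beta> assms] by simp
qed

lemma revlex_max_meets_row_in_diag:
  assumes "k \<in> {1..i}" "1 < CARD('m)" "1 \<le> j" "j \<le> k"
  shows "\<exists>G. revlex_max Ppt prec (UNIV \<times> (UNIV - \<beta> ` {1..<j})) G
    \<and> {w \<in> G. fst w = \<alpha> k} \<subseteq> {diag k}"
  using assms(4)
proof (induction j rule: inc_induct)
  case base
  have "\<not> (\<forall>a1 a2 :: 'm. a1 = a2)"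
    using assms(2) card_le_Suc0_iff_eq[of "UNIV :: 'm set"] by auto
  then obtain a where "a \<noteq> \<alpha> k"
    by metis
  define B where "B = UNIV - \<beta> ` {1..<k}"
  have "diag k \<in> UNIV \<times> B"
    using diag_column_fresh[OF assms(1)] by (simp add: B_def)
  then obtain G where G: "revlex_max Ppt prec ((UNIV - {\<alpha> k}) \<times> B) G"
    using revlex_max_product_exists[OF transp totalp, of "UNIV - {\<alpha> k}" B] \<open>a \<noteq> \<alpha> k\<close> by blast
  have "revlex_max Ppt prec (UNIV \<times> B) (insert (diag k) G)"
    using \<open>diag k \<in> UNIV \<times> B\<close> diag_least_in_remaining_columns[OF assms(1)] G
    unfolding B_def by (intro revlex_max_insert_row) auto
  moreover have "{w \<in> insert (diag k) G. fst w = \<alpha> k} \<subseteq> {diag k}"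
    using revlex_max_subset[OF G] by auto
  ultimately show ?case
    unfolding B_def by blast
next
  case (step n)
  have n: "n \<in> {1..i}"
    using assms step.hyps by auto
  define B where "B = UNIV - \<beta> ` {1..<n}"
  have "B - {\<beta> n} = UNIV - \<beta> ` {1..<Suc n}"
    using n by (auto simp: B_def atLeastLessThanSuc)
  with step.IH obtain G where G: "revlex_max Ppt prec (UNIV \<times> (B - {\<beta> n})) G"
    and row: "{w \<in> G. fst w = \<alpha> k} \<subseteq> {diag k}"
    by auto
  have "diag n \<in> UNIV \<times> B"
    using diag_column_fresh[OF n] by (simp add: B_def)
  then have "revlex_max Ppt prec (UNIV \<times> B) (insert (diag n) G)"
    using diag_least_in_remaining_columns[OF n] G unfolding B_def by (intro revlex_max_insert_column) auto
  moreover have "\<alpha> n \<noteq> \<alpha> k"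
    using inj_onD[OF inj_\<alpha> _ n assms(1)] step.hyps by auto
  then have "{w \<in> insert (diag n) G. fst w = \<alpha> k} \<subseteq> {diag k}"
    using row by auto
  ultimately show ?case
    unfolding B_def by blast
qed

lemma revlex_max_avoiding:
  assumes "i = CARD('m)" "1 < CARD('m)" "y \<notin> diag ` {1..i}"
  shows "\<exists>G. revlex_max Ppt prec UNIV G \<and> y \<notin> G"
proof -
  have "\<alpha> ` {1..i} = UNIV"
    using card_image[OF inj_\<alpha>] assms(1) by (intro card_subset_eq) auto
  then obtain k where k: "k \<in> {1..i}" "fst y = \<alpha> k"
    by (metis UNIV_I imageE)
  then obtain G where "revlex_max Ppt prec (UNIV \<times> (UNIV - \<beta> ` {1..<1})) G"
    and "{w \<in> G. fst w = \<alpha> k} \<subseteq> {diag k}"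
    using revlex_max_meets_row_in_diag[of k 1] assms(2) by auto
  moreover have "y \<noteq> diag k"
    using assms(3) k(1) by blast
  ultimately show ?thesis
    using k(2) by auto
qed

end

theorem lemma4p12:
  fixes i :: nat
    and \<alpha> :: "nat \<Rightarrow> 'm::finite" and \<beta> :: "nat \<Rightarrow> 'n::finite"
    and prec :: "'m \<times> 'n \<Rightarrow> 'm \<times> 'n \<Rightarrow> bool"
  assumes "i \<le> CARD('m)" and "CARD('m) \<le> CARD('n)"
    and "inj_on \<alpha> {1..i}" and "inj_on \<beta> {1..i}"
    and "transp prec" and "irreflp prec"
    and "\<forall>x y. x \<noteq> y \<longrightarrow> prec x y \<or> prec y x"
    and "\<forall>k\<in>{1..i}. \<forall>l\<in>{1..i}. k < l \<longrightarrow> prec (\<alpha> k, \<beta> k) (\<alpha> l, \<beta> l)"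
    and "\<forall>k\<in>{1..i}. \<forall>x. x \<notin> (\<lambda>l. (\<alpha> l, \<beta> l)) ` {1..i} \<longrightarrow> prec (\<alpha> k, \<beta> k) x"
  shows "(\<forall>k\<in>{1..i}. cone_point (revlex_complex Ppt prec UNIV) (\<alpha> k, \<beta> k))
       \<and> (i = CARD('m) \<and> CARD('m) > 1 \<longrightarrow>
            delete_vertices (revlex_complex Ppt prec UNIV) ((\<lambda>l. (\<alpha> l, \<beta> l)) ` {1..i})
            = core (revlex_complex Ppt prec UNIV))"
proof -
  interpret diagonal_revlex i \<alpha> \<beta> prec
    using assms(3-9) by unfold_locales (simp_all add: totalp_on_def)
  let ?\<Delta> = "revlex_complex Ppt prec (UNIV :: ('m \<times> 'n) set)"
  have cone_point_iff: "cone_point ?\<Delta> v \<longleftrightarrow> (\<forall>G. revlex_max Ppt prec UNIV G \<longrightarrow> v \<in> G)"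
    for v
    by (rule cone_point_revlex_complex[OF transp totalp])
  have diag_cone: "cone_point ?\<Delta> (diag k)" if "k \<in> {1..i}" for k
    unfolding cone_point_iff using diag_in_revlex_max[of UNIV UNIV] that by simp
  moreover have "{v. cone_point ?\<Delta> v} = diag ` {1..i}" if "i = CARD('m)" "1 < CARD('m)"
  proof (intro equalityI subsetI)
    fix v
    assume "v \<in> {v. cone_point ?\<Delta> v}"
    then show "v \<in> diag ` {1..i}"
      using revlex_max_avoiding[OF that] unfolding cone_point_iff by blast
  qed (use diag_cone in blast)
  moreover have "core ?\<Delta> = delete_vertices ?\<Delta> {v. cone_point ?\<Delta> v}"
    unfolding revlex_complex_def by (rule core_complex_of)
  ultimately show ?thesis
    by auto
qed

end
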